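(* Let $\mathcal{H}$ be a real Hilbert space, $\bar{K}\subseteq\mathcal{H}$ a nonempty closed set, $F:\mathcal{H}\times\mathcal{H}\to\mathbb{R}$ a bifunction, and $k,r>0$, $\lambda>0$ constants; put $\epsilon=\frac{k}{2r}$. Assume $F$ is pseudomonotone on $\bar{K}\times\bar{K}$ in the sense that for all $u,v\in\bar{K}$, $$F(u,v)+\frac{k}{2r}\|v-u\|^2\ge 0 \implies F(v,u)+\frac{k}{2r}\|v-u\|^2\le 0.$$ Let $u^*\in\bar{K}$ be a solution of the uniformly regular equilibrium problem, i.e. $F(u^*,v)+\frac{k}{2r}\|v-u^*\|^2\ge 0$ for all $v\in\bar{K}$. Let $u_n\in\mathcal{H}$ and let $u_{n+1}\in\bar{K}$ be generated by the proximal method, i.e. $$\lambda F(u_{n+1},v)+\Big\langle \big(1+\tfrac{k}{2r}\big)(u_{n+1}-u_n)+\tfrac{k}{2r}(v-u_{n+1}),\,v-u_{n+1}\Big\rangle\ge 0\quad\forall v\in\bar{K}.$$ Then $$\|u_{n+1}-u^*\|^2\le (1+\epsilon)^2\|u_n-u^*\|^2-\|u_{n+1}-(1+\epsilon)u_n+\epsilon u^*\|^2.$$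
   Context: $\bar{K}$ is intended to be a (possibly nonconvex) uniformly $r$-prox-regular set: for all $u\in\bar K$ and all nonzero proximal normals $w$ to $\bar K$ at $u$ with $\|w\|\le r$, $\langle w,v-u\rangle\le\frac{1}{2r}\|v-u\|^2$ for all $v\in\bar K$. *)

theory Defs
  imports "HOL-Analysis.Analysis"
begin

definition proximal_normal :: "'a::real_inner set \<Rightarrow> 'a \<Rightarrow> 'a \<Rightarrow> bool" where
  "proximal_normal K u w \<longleftrightarrow> u \<in> K \<and>
     (\<exists>t>0. \<forall>v\<in>K. dist (u + t *\<^sub>R w) u \<le> dist (u + t *\<^sub>R w) v)"

definition uniformly_prox_regular :: "real \<Rightarrow> 'a::real_inner set \<Rightarrow> bool" where
  "uniformly_prox_regular r K \<longleftrightarrow>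
     (\<forall>u\<in>K. \<forall>w. proximal_normal K u w \<and> w \<noteq> 0 \<and> norm w \<le> r \<longrightarrow>
        (\<forall>v\<in>K. inner w (v - u) \<le> 1 / (2 * r) * (norm (v - u))\<^sup>2))"

end

theory Submission
  imports Defs
begin

text \<open>Testing the proximal step with \<open>v = u\<^sup>*\<close> kills the bifunction term: \<open>u\<^sup>*\<close> solves the
  problem, so pseudomonotonicity gives \<open>F(u\<^sub>n\<^sub>+\<^sub>1, u\<^sup>*) \<le> -\<epsilon>\<parallel>u\<^sub>n\<^sub>+\<^sub>1 - u\<^sup>*\<parallel>\<^sup>2 \<le> 0\<close>.
  With \<open>a = u\<^sub>n\<^sub>+\<^sub>1 - u\<^sup>*\<close> and \<open>b = u\<^sub>n - u\<^sup>*\<close> the remaining inner product is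
  \<open>(1+\<epsilon>)\<langle>a,b\<rangle> - \<parallel>a\<parallel>\<^sup>2\<close>, and \<open>\<parallel>a\<parallel>\<^sup>2 \<le> (1+\<epsilon>)\<langle>a,b\<rangle>\<close> is exactly the claim after expanding
  \<open>\<parallel>a - (1+\<epsilon>)b\<parallel>\<^sup>2\<close>.\<close>

lemma inner_proximal_step_eq:
  fixes w x v :: "'a::real_inner"
  shows "inner ((1 + e) *\<^sub>R (w - x) + e *\<^sub>R (v - w)) (v - w)
           = (1 + e) * inner (w - v) (x - v) - (norm (w - v))\<^sup>2"
  unfolding power2_norm_eq_inner
  by (simp add: inner_diff_left inner_diff_right inner_commute algebra_simps)

lemma power2_norm_le_diff_iff:
  fixes a b :: "'a::real_inner"
  shows "(norm a)\<^sup>2 \<le> c\<^sup>2 * (norm b)\<^sup>2 - (norm (a - c *\<^sub>R b))\<^sup>2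
           \<longleftrightarrow> (norm a)\<^sup>2 \<le> c * inner a b"
proof -
  have "(norm (a - c *\<^sub>R b))\<^sup>2 = (norm a)\<^sup>2 - 2 * c * inner a b + c\<^sup>2 * (norm b)\<^sup>2"
    unfolding power2_norm_eq_inner
    by (simp add: inner_diff_left inner_diff_right inner_commute algebra_simps power2_eq_square)
  then show ?thesis by linarith
qed

theorem mainTheorem1:
  fixes K :: "'a::{real_inner, complete_space} set"
    and F :: "'a \<Rightarrow> 'a \<Rightarrow> real"
    and k r lam \<epsilon> :: real
    and u :: "nat \<Rightarrow> 'a"
    and ustar :: 'a
    and n :: nat
  assumes K_nonempty: "K \<noteq> {}"
    and K_closed: "closed K"
    and K_prox: "uniformly_prox_regular r K"
    and k_pos: "k > 0" and r_pos: "r > 0" and lam_pos: "lam > 0"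
    and eps_def: "\<epsilon> = k / (2 * r)"
    and pseudomonotone: "\<forall>x\<in>K. \<forall>v\<in>K.
        F x v + k / (2 * r) * (norm (v - x))\<^sup>2 \<ge> 0 \<longrightarrow>
        F v x + k / (2 * r) * (norm (v - x))\<^sup>2 \<le> 0"
    and ustar_in: "ustar \<in> K"
    and ustar_sol: "\<forall>v\<in>K. F ustar v + k / (2 * r) * (norm (v - ustar))\<^sup>2 \<ge> 0"
    and next_in: "u (Suc n) \<in> K"
    and prox_step: "\<forall>v\<in>K. lam * F (u (Suc n)) v
        + inner ((1 + k / (2 * r)) *\<^sub>R (u (Suc n) - u n) + (k / (2 * r)) *\<^sub>R (v - u (Suc n)))
                (v - u (Suc n)) \<ge> 0"
  shows "(norm (u (Suc n) - ustar))\<^sup>2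
     \<le> (1 + \<epsilon>)\<^sup>2 * (norm (u n - ustar))\<^sup>2
       - (norm (u (Suc n) - (1 + \<epsilon>) *\<^sub>R u n + \<epsilon> *\<^sub>R ustar))\<^sup>2"
proof -
  define a where "a = u (Suc n) - ustar"
  define b where "b = u n - ustar"
  have eps_pos: "\<epsilon> > 0" using eps_def k_pos r_pos by simp
  have "F (u (Suc n)) ustar + \<epsilon> * (norm a)\<^sup>2 \<le> 0"
    using pseudomonotone ustar_in next_in ustar_sol eps_def a_def by auto
  moreover have "\<epsilon> * (norm a)\<^sup>2 \<ge> 0" using eps_pos by simp
  ultimately have "F (u (Suc n)) ustar \<le> 0" by linarith
  then have "lam * F (u (Suc n)) ustar \<le> 0" using lam_pos by (simp add: mult_nonneg_nonpos)
  moreover have "lam * F (u (Suc n)) ustar + ((1 + \<epsilon>) * inner a b - (norm a)\<^sup>2) \<ge> 0"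
    using prox_step ustar_in unfolding a_def b_def eps_def inner_proximal_step_eq by blast
  ultimately have "(norm a)\<^sup>2 \<le> (1 + \<epsilon>) * inner a b" by linarith
  then have "(norm a)\<^sup>2 \<le> (1 + \<epsilon>)\<^sup>2 * (norm b)\<^sup>2 - (norm (a - (1 + \<epsilon>) *\<^sub>R b))\<^sup>2"
    by (simp only: power2_norm_le_diff_iff)
  moreover have "a - (1 + \<epsilon>) *\<^sub>R b = u (Suc n) - (1 + \<epsilon>) *\<^sub>R u n + \<epsilon> *\<^sub>R ustar"
    unfolding a_def b_def by (simp add: algebra_simps)
  ultimately show ?thesis unfolding a_def b_def by simp
qed

end
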